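(* Let ${\tt D}=({\tt M},{\tt C},\equiv,\underline{\cdot})$ be a reflective distillery whose calculus is deterministic, and let $s$ be an initial state. For every derivation $d:\underline{s}\multimap^* t$ there is an execution $\rho: s\to^* s'$ such that $t\equiv\underline{s'}$, $|\rho|_{\mathtt m}=|d|_{\mathtt m}$, $|\rho|_{\mathtt e}=|d|_{\mathtt e}$ and $|\rho|_{\mathtt p}=|d|$.
   Context: A distillery ${\tt D}=({\tt M},{\tt C},\equiv,\underline{\cdot})$ consists of: (1) an abstract machine ${\tt M}$: a deterministic labelled transition system $\to$ on states, with initial states (in bijection with closed $\lambda$-terms; states reachable from initial ones are reachable) and a partition of transitions into commutative ($\to_{\mathtt c}$) and principal ones, the latter partitioned into multiplicative ($\to_{\mathtt m}$) and exponential ($\to_{\mathtt e}$); (2) a calculus ${\tt C}$ given by rewriting relations $\multimap_{\mathtt m},\multimap_{\mathtt e}$ on terms, $\multimap:=\multimap_{\mathtt m}\cup\multimap_{\mathtt e}$; (3) an equivalence $\equiv$ on terms that is a strong bisimulation: for $\mathtt x\in\{\mathtt m,\mathtt e\}$, $t\equiv u$ and $t\multimap_{\mathtt x}t'$ imply $u\multimap_{\mathtt x}u'$ for some $u'\equiv t'$; (4) a decoding $\underline{\cdot}$ from states to terms such that on reachable states: $s\to_{\mathtt c}s'$ implies $\underline{s}\equiv\underline{s'}$; $s\to_{\mathtt m}s'$ implies $\underline{s}\multimap_{\mathtt m}t\equiv\underline{s'}$ for some $t$; $s\to_{\mathtt e}s'$ implies $\underline{s}\multimap_{\mathtt e}t\equiv\underline{s'}$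 for some $t$. Reflective: (Termination) $\to_{\mathtt c}$ terminates on reachable states; (Progress) if $s$ is reachable, no $\to_{\mathtt c}$ transition applies to $s$, and $\underline{s}\multimap_{\mathtt x}t$ with $\mathtt x\in\{\mathtt m,\mathtt e\}$, then $s\to_{\mathtt x}s'$ for some $s'$. The calculus is deterministic if every term $t$ admits at most one pair $(\mathtt x,u)$ with $t\multimap_{\mathtt x}u$. An execution is a sequence of transitions from an initial state; $|\rho|_{\mathtt m},|\rho|_{\mathtt e},|\rho|_{\mathtt p}$ count multiplicative, exponential and principal transitions of $\rho$; for a derivation $d$, $|d|$ is its length and $|d|_{\mathtt m},|d|_{\mathtt e}$ count its $\multimap_{\mathtt m}$ and $\multimap_{\mathtt e}$ steps. *)

theory Defs
  imports Main
begin

datatype lterm = LVar nat | LLam lterm | LApp lterm lterm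

fun loose_ok :: "nat \<Rightarrow> lterm \<Rightarrow> bool" where
  "loose_ok k (LVar i) = (i < k)"
| "loose_ok k (LLam t) = loose_ok (Suc k) t"
| "loose_ok k (LApp t u) = (loose_ok k t \<and> loose_ok k u)"

definition closed_lterm :: "lterm \<Rightarrow> bool" where
  "closed_lterm t = loose_ok 0 t"

datatype pkind = Mul | Exp

datatype tlabel = Comm | Princ pkind

inductive reachable :: "('s \<Rightarrow> bool) \<Rightarrow> ('s \<Rightarrow> tlabel \<Rightarrow> 's \<Rightarrow> bool) \<Rightarrow> 's \<Rightarrow> bool"
  for init step where
  reach_init: "init s \<Longrightarrow> reachable init step s"
| reach_step: "reachable init step s \<Longrightarrow> step s l s' \<Longrightarrow> reachable init step s'"

definition abstract_machine :: "('s \<Rightarrow> bool) \<Rightarrow> ('s \<Rightarrow> tlabel \<Rightarrow> 's \<Rightarrow> bool) \<Rightarrow> bool" where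
  "abstract_machine init step \<longleftrightarrow>
     (\<forall>s l1 s1 l2 s2. step s l1 s1 \<and> step s l2 s2 \<longrightarrow> l1 = l2 \<and> s1 = s2) \<and>
     (\<exists>f. bij_betw f {t. closed_lterm t} {s. init s})"

inductive exec :: "('s \<Rightarrow> tlabel \<Rightarrow> 's \<Rightarrow> bool) \<Rightarrow> 's \<Rightarrow> tlabel list \<Rightarrow> 's \<Rightarrow> bool"
  for step where
  exec_nil: "exec step s [] s"
| exec_cons: "step s l s1 \<Longrightarrow> exec step s1 rho s' \<Longrightarrow> exec step s (l # rho) s'"

text \<open>Derivations in the calculus: red x t u is t \<multimap>_x u.\<close>
inductive deriv :: "(pkind \<Rightarrow> 't \<Rightarrow> 't \<Rightarrow> bool) \<Rightarrow> 't \<Rightarrow> pkind list \<Rightarrow> 't \<Rightarrow> bool"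
  for red where
  deriv_nil: "deriv red t [] t"
| deriv_cons: "red x t t1 \<Longrightarrow> deriv red t1 d t' \<Longrightarrow> deriv red t (x # d) t'"

definition count_exec :: "tlabel \<Rightarrow> tlabel list \<Rightarrow> nat" where
  "count_exec l rho = length (filter (\<lambda>l'. l' = l) rho)"

definition count_principal :: "tlabel list \<Rightarrow> nat" where
  "count_principal rho = length (filter (\<lambda>l. l \<noteq> Comm) rho)"

definition count_deriv :: "pkind \<Rightarrow> pkind list \<Rightarrow> nat" where
  "count_deriv x d = length (filter (\<lambda>y. y = x) d)"

definition strong_bisim :: "('t \<Rightarrow> 't \<Rightarrow> bool) \<Rightarrow> (pkind \<Rightarrow> 't \<Rightarrow> 't \<Rightarrow> bool) \<Rightarrow> bool" where
  "strong_bisim eqv red \<longleftrightarrow>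
     (\<forall>x t u t'. eqv t u \<and> red x t t' \<longrightarrow> (\<exists>u'. red x u u' \<and> eqv t' u'))"

definition distillery ::
  "('s \<Rightarrow> bool) \<Rightarrow> ('s \<Rightarrow> tlabel \<Rightarrow> 's \<Rightarrow> bool) \<Rightarrow> (pkind \<Rightarrow> 't \<Rightarrow> 't \<Rightarrow> bool)
   \<Rightarrow> ('t \<Rightarrow> 't \<Rightarrow> bool) \<Rightarrow> ('s \<Rightarrow> 't) \<Rightarrow> bool" where
  "distillery init step red eqv dec \<longleftrightarrow>
     abstract_machine init step \<and>
     equivp eqv \<and>
     strong_bisim eqv red \<and>
     (\<forall>s s'. reachable init step s \<and> step s Comm s' \<longrightarrow> eqv (dec s) (dec s')) \<and>
     (\<forall>s s' x. reachable init step s \<and> step s (Princ x) s' \<longrightarrow>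
        (\<exists>t. red x (dec s) t \<and> eqv t (dec s')))"

definition reflective_distillery ::
  "('s \<Rightarrow> bool) \<Rightarrow> ('s \<Rightarrow> tlabel \<Rightarrow> 's \<Rightarrow> bool) \<Rightarrow> (pkind \<Rightarrow> 't \<Rightarrow> 't \<Rightarrow> bool)
   \<Rightarrow> ('t \<Rightarrow> 't \<Rightarrow> bool) \<Rightarrow> ('s \<Rightarrow> 't) \<Rightarrow> bool" where
  "reflective_distillery init step red eqv dec \<longleftrightarrow>
     distillery init step red eqv dec \<and>
     wfP (\<lambda>s' s. reachable init step s \<and> step s Comm s') \<and>
     (\<forall>s x t. reachable init step s \<and> \<not> (\<exists>s'. step s Comm s') \<and> red x (dec s) t
        \<longrightarrow> (\<exists>s'. step s (Princ x) s'))"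

definition deterministic_calculus :: "(pkind \<Rightarrow> 't \<Rightarrow> 't \<Rightarrow> bool) \<Rightarrow> bool" where
  "deterministic_calculus red \<longleftrightarrow>
     (\<forall>t x1 u1 x2 u2. red x1 t u1 \<and> red x2 t u2 \<longrightarrow> x1 = x2 \<and> u1 = u2)"

end

theory Submission
  imports Defs
begin

text \<open>Follow the derivation one reduction at a time. Before each reduction the machine
  first exhausts its commutative transitions, which terminate and are invisible up to \<open>\<equiv>\<close>. In the
  resulting state the reduction of the (equivalent) decoding is matched, via strong bisimulation,
  by a reduction of the decoding itself, so progress yields a principal transition of the same
  kind. Determinism of the calculus identifies the reduct of this transition with the one given
  by bisimulation, so the invariant \<open>u \<equiv> dec s\<close> is re-established.\<close>

fun principal_kinds :: "tlabel list \<Rightarrow> pkind list" where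
  "principal_kinds [] = []"
| "principal_kinds (Comm # rho) = principal_kinds rho"
| "principal_kinds (Princ x # rho) = x # principal_kinds rho"

lemma count_exec_Princ_eq_count_deriv:
  "count_exec (Princ x) rho = count_deriv x (principal_kinds rho)"
  by (induction rho rule: principal_kinds.induct) (auto simp: count_exec_def count_deriv_def)

lemma count_principal_eq_length:
  "count_principal rho = length (principal_kinds rho)"
  by (induction rho rule: principal_kinds.induct) (auto simp: count_principal_def)

lemma principal_kinds_append [simp]:
  "principal_kinds (rho @ rho') = principal_kinds rho @ principal_kinds rho'"
  by (induction rho rule: principal_kinds.induct) auto

lemma exec_append:
  "exec step s rho s1 \<Longrightarrow> exec step s1 rho' s2 \<Longrightarrow> exec step s (rho @ rho') s2"
  by (induction rule: exec.induct) (auto intro: exec_cons)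

lemma reachable_exec:
  "exec step s rho s' \<Longrightarrow> reachable init step s \<Longrightarrow> reachable init step s'"
  by (induction rule: exec.induct) (auto intro: reach_step)

lemma commutative_normal_form:
  assumes dist: "distillery init step red eqv dec"
    and wf: "wfP (\<lambda>s' s. reachable init step s \<and> step s Comm s')"
  shows "reachable init step s \<Longrightarrow> \<exists>rho s'. exec step s rho s' \<and> principal_kinds rho = [] \<and>
    eqv (dec s) (dec s') \<and> (\<nexists>s''. step s' Comm s'')"
proof (induction s rule: wfp_induct_rule[OF wf])
  case (1 s)
  have eqv: "equivp eqv" using dist unfolding distillery_def by blast
  have comm: "\<And>s s'. reachable init step s \<Longrightarrow> step s Comm s' \<Longrightarrow> eqv (dec s) (dec s')"
    using dist unfolding distillery_def by blast
  show ?case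
  proof (cases "\<exists>s1. step s Comm s1")
    case True
    then obtain s1 where step: "step s Comm s1" ..
    have "reachable init step s1" using \<open>reachable init step s\<close> step by (rule reach_step)
    with "1.IH"[of s1] \<open>reachable init step s\<close> step obtain rho s' where "exec step s1 rho s'"
        "principal_kinds rho = []" "eqv (dec s1) (dec s')" "\<nexists>s''. step s' Comm s''"
      by blast
    moreover have "eqv (dec s) (dec s1)" using comm \<open>reachable init step s\<close> step .
    moreover have "exec step s (Comm # rho) s'" using step \<open>exec step s1 rho s'\<close> by (rule exec_cons)
    ultimately show ?thesis
      using equivp_transp[OF eqv] by (intro exI[of _ "Comm # rho"] exI[of _ s']) auto
  next
    case False
    moreover have "eqv (dec s) (dec s)" using eqv by (rule equivp_reflp)
    ultimately show ?thesis by (intro exI[of _ "[]"] exI[of _ s]) (auto intro: exec_nil)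
  qed
qed

text \<open>Progress only guarantees \<^emph>\<open>some\<close> principal transition of kind \<open>x\<close>; determinism is what
  makes its reduct the one obtained from the bisimulation.\<close>

lemma principal_step_simulates_reduction:
  assumes refl: "reflective_distillery init step red eqv dec"
    and det: "deterministic_calculus red"
    and reach: "reachable init step s" and normal: "\<nexists>s1. step s Comm s1"
    and "eqv u (dec s)" and "red x u u'"
  obtains s' where "step s (Princ x) s'" "eqv u' (dec s')"
proof -
  have eqv: "equivp eqv" and bisim: "strong_bisim eqv red"
    and princ: "\<And>s s'. reachable init step s \<Longrightarrow> step s (Princ x) s' \<Longrightarrow>
      \<exists>t. red x (dec s) t \<and> eqv t (dec s')"
    and progress: "\<And>t. red x (dec s) t \<Longrightarrow> \<exists>s'. step s (Princ x) s'"
    using refl reach normal unfolding reflective_distillery_def distillery_def by blast+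
  obtain v where red_v: "red x (dec s) v" and "eqv u' v"
    using bisim \<open>eqv u (dec s)\<close> \<open>red x u u'\<close> unfolding strong_bisim_def by blast
  obtain s' where step: "step s (Princ x) s'" using progress red_v by blast
  obtain w where "red x (dec s) w" and "eqv w (dec s')" using princ reach step by blast
  with red_v det have "eqv v (dec s')" unfolding deterministic_calculus_def by blast
  with \<open>eqv u' v\<close> eqv have "eqv u' (dec s')" by (meson equivp_transp)
  with step show ?thesis by (rule that)
qed

lemma execution_simulates_derivation:
  assumes refl: "reflective_distillery init step red eqv dec"
    and det: "deterministic_calculus red"
  shows "deriv red u d t \<Longrightarrow> reachable init step s \<Longrightarrow> eqv u (dec s) \<Longrightarrow>
    \<exists>rho s'. exec step s rho s' \<and> eqv t (dec s') \<and> principal_kinds rho = d"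
proof (induction arbitrary: s rule: deriv.induct)
  case (deriv_nil u)
  then show ?case by (intro exI[of _ "[]"] exI[of _ s]) (auto intro: exec_nil)
next
  case (deriv_cons x u u1 d t)
  have dist: "distillery init step red eqv dec"
    and wf: "wfP (\<lambda>s' s. reachable init step s \<and> step s Comm s')"
    using refl unfolding reflective_distillery_def by auto
  have eqv: "equivp eqv" using dist unfolding distillery_def by blast
  obtain rho1 s1 where exec1: "exec step s rho1 s1" and comm: "principal_kinds rho1 = []"
    and "eqv (dec s) (dec s1)" and normal: "\<nexists>s'. step s1 Comm s'"
    using commutative_normal_form[OF dist wf \<open>reachable init step s\<close>] by blast
  have reach1: "reachable init step s1" using exec1 \<open>reachable init step s\<close> by (rule reachable_exec)
  have "eqv u (dec s1)" using deriv_cons.prems(2) \<open>eqv (dec s) (dec s1)\<close> eqv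
    by (meson equivp_transp)
  then obtain s2 where step: "step s1 (Princ x) s2" and "eqv u1 (dec s2)"
    using principal_step_simulates_reduction[OF refl det reach1 normal] deriv_cons.hyps(1) by blast
  moreover have "reachable init step s2" using reach1 step by (rule reach_step)
  ultimately obtain rho2 s' where exec2: "exec step s2 rho2 s'" and "eqv t (dec s')"
    and "principal_kinds rho2 = d"
    using deriv_cons.IH by blast
  moreover have "exec step s (rho1 @ Princ x # rho2) s'"
    using exec1 exec_cons[OF step exec2] by (rule exec_append)
  ultimately show ?case using comm by (intro exI[of _ "rho1 @ Princ x # rho2"] exI[of _ s']) auto
qed

theorem mainTheorem5:
  fixes init :: "'s \<Rightarrow> bool" and step :: "'s \<Rightarrow> tlabel \<Rightarrow> 's \<Rightarrow> bool"
    and red :: "pkind \<Rightarrow> 't \<Rightarrow> 't \<Rightarrow> bool" and eqv :: "'t \<Rightarrow> 't \<Rightarrow> bool"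
    and dec :: "'s \<Rightarrow> 't"
  assumes "reflective_distillery init step red eqv dec"
    and "deterministic_calculus red"
    and "init s"
    and "deriv red (dec s) d t"
  shows "\<exists>rho s'. exec step s rho s' \<and> eqv t (dec s') \<and>
           count_exec (Princ Mul) rho = count_deriv Mul d \<and>
           count_exec (Princ Exp) rho = count_deriv Exp d \<and>
           count_principal rho = length d"
proof -
  have "equivp eqv" using assms(1) unfolding reflective_distillery_def distillery_def by blast
  then have "eqv (dec s) (dec s)" by (rule equivp_reflp)
  moreover have "reachable init step s" using assms(3) by (rule reach_init)
  ultimately obtain rho s' where "exec step s rho s'" "eqv t (dec s')" "principal_kinds rho = d"
    using execution_simulates_derivation[OF assms(1,2,4)] by blast
  then show ?thesis by (auto simp: count_exec_Princ_eq_count_deriv count_principal_eq_length)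
qed

end
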